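(* Let $T$ be a non-abelian finite simple group. The fixity of $\mathrm{Hol}(T)$ in its action on $T$ (the maximum number of points of $T$ fixed by a non-identity element of $\mathrm{Hol}(T)$) equals $h(T)=\max\{|C_T(x)|:1\neq x\in\mathrm{Aut}(T)\}$.
   Context: $\mathrm{Hol}(T)=T{:}\mathrm{Aut}(T)$ acts on $T$ by $t^{g\alpha}=(g^{-1}t)^\alpha$ for $g\in T$, $\alpha\in\mathrm{Aut}(T)$. *)

theory Defs
  imports "HOL-Algebra.Algebra"
begin

text \<open>Elements of Hol(T) = T:Aut(T), represented as pairs (g, alpha) with g in T and
alpha in Aut(T) (automorphisms as extensional bijections of the carrier, library notion auto).\<close>
definition hol_elems :: "('a, 'b) monoid_scheme \<Rightarrow> ('a \<times> ('a \<Rightarrow> 'a)) set" where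
  "hol_elems T = carrier T \<times> auto T"

definition hol_act :: "('a, 'b) monoid_scheme \<Rightarrow> 'a \<times> ('a \<Rightarrow> 'a) \<Rightarrow> 'a \<Rightarrow> 'a" where
  "hol_act T p t = snd p (inv\<^bsub>T\<^esub> (fst p) \<otimes>\<^bsub>T\<^esub> t)"

definition hol_one :: "('a, 'b) monoid_scheme \<Rightarrow> 'a \<times> ('a \<Rightarrow> 'a)" where
  "hol_one T = (\<one>\<^bsub>T\<^esub>, (\<lambda>x \<in> carrier T. x))"

definition hol_fix :: "('a, 'b) monoid_scheme \<Rightarrow> 'a \<times> ('a \<Rightarrow> 'a) \<Rightarrow> 'a set" where
  "hol_fix T p = {t \<in> carrier T. hol_act T p t = t}"

definition hol_fixity :: "('a, 'b) monoid_scheme \<Rightarrow> nat" where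
  "hol_fixity T = Max {card (hol_fix T p) | p. p \<in> hol_elems T \<and> p \<noteq> hol_one T}"

definition aut_centralizer :: "('a, 'b) monoid_scheme \<Rightarrow> ('a \<Rightarrow> 'a) \<Rightarrow> 'a set" where
  "aut_centralizer T x = {t \<in> carrier T. x t = t}"

definition h_param :: "('a, 'b) monoid_scheme \<Rightarrow> nat" where
  "h_param T = Max {card (aut_centralizer T x) | x. x \<in> auto T \<and> x \<noteq> (\<lambda>y \<in> carrier T. y)}"

end

theory Submission
  imports Defs
begin

text \<open>A point \<open>t\<^sub>0\<close> fixed by \<open>(g, \<alpha>)\<close> satisfies \<open>\<alpha> (g\<inverse> t\<^sub>0) = t\<^sub>0\<close>, and then
  \<open>\<alpha> (g\<inverse> t\<^sub>0 s) = t\<^sub>0 \<alpha>(s)\<close>: so the fixed points of \<open>(g, \<alpha>)\<close> form the left coset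
  \<open>t\<^sub>0 C\<^sub>T(\<alpha>)\<close>, and an element of \<open>Hol(T)\<close> fixes either no point or exactly
  \<open>|C\<^sub>T(\<alpha>)|\<close> points. If \<open>\<alpha> = 1\<close> and \<open>g \<noteq> 1\<close> the action is a fixed-point-free
  translation, while the elements \<open>(1, \<alpha>)\<close> fix exactly \<open>C\<^sub>T(\<alpha>)\<close>. Hence both maxima
  range over the same values up to \<open>0\<close>; non-commutativity of \<open>T\<close> provides a
  non-trivial inner automorphism, so the maximum \<open>h(T)\<close> is taken over a non-empty set.\<close>

lemma Max_eq_between_insert_zero:
  fixes A B :: "nat set"
  assumes "finite B" "B \<noteq> {}" "B \<subseteq> A" "A \<subseteq> insert 0 B"
  shows "Max A = Max B"
proof (rule antisym)
  have "finite A"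
    using assms(1,4) finite_subset by blast
  then show "Max B \<le> Max A"
    using assms(2,3) by (intro Max_mono)
  have "Max A \<le> Max (insert 0 B)"
    using assms by (intro Max_mono) auto
  also have "\<dots> = Max B"
    using assms(1,2) by (simp add: Max_insert)
  finally show "Max A \<le> Max B" .
qed

lemma (in group) conjugation_in_auto:
  assumes "g \<in> carrier G"
  shows "(\<lambda>h \<in> carrier G. g \<otimes> h \<otimes> inv g) \<in> auto G"
proof -
  have "(\<lambda>h \<in> carrier G. g \<otimes> h \<otimes> inv g) \<in> hom G G"
    using assms by (intro homI) (simp_all add: m_assoc inv_solve_left)
  then show ?thesis
    using conjugation_is_bij[OF assms] by (simp add: auto_def Bij_def)
qed

lemma (in group) nontrivial_auto_if_not_comm:
  assumes "\<not> comm_group G"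
  obtains \<alpha> where "\<alpha> \<in> auto G" "\<alpha> \<noteq> (\<lambda>x \<in> carrier G. x)"
proof -
  obtain a b where ab: "a \<in> carrier G" "b \<in> carrier G" "a \<otimes> b \<noteq> b \<otimes> a"
    using assms group_comm_groupI by blast
  have "a \<otimes> b \<otimes> inv a \<noteq> b"
  proof
    assume "a \<otimes> b \<otimes> inv a = b"
    then have "a \<otimes> b \<otimes> inv a \<otimes> a = b \<otimes> a" by simp
    with ab show False by (simp add: m_assoc)
  qed
  then have "(\<lambda>h \<in> carrier G. a \<otimes> h \<otimes> inv a) \<noteq> (\<lambda>x \<in> carrier G. x)"
    by (metis ab(2) restrict_apply')
  with conjugation_in_auto[OF ab(1)] show thesis by (rule that)
qed

lemma (in group) hol_fix_one:
  "hol_fix G (\<one>, \<alpha>) = aut_centralizer G \<alpha>"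
  by (auto simp: hol_fix_def hol_act_def aut_centralizer_def)

lemma (in group) hol_fix_translation:
  assumes "g \<in> carrier G" "g \<noteq> \<one>"
  shows "hol_fix G (g, \<lambda>x \<in> carrier G. x) = {}"
  using assms by (auto simp: hol_fix_def hol_act_def)

lemma (in group) hol_fix_eq_coset:
  assumes "g \<in> carrier G" "\<alpha> \<in> hom G G" and t: "t \<in> hol_fix G (g, \<alpha>)"
  shows "hol_fix G (g, \<alpha>) = (\<lambda>s. t \<otimes> s) ` aut_centralizer G \<alpha>"
proof -
  have tG: "t \<in> carrier G" and t_fixed: "\<alpha> (inv g \<otimes> t) = t"
    using t by (auto simp: hol_fix_def hol_act_def)
  have shift: "hol_act G (g, \<alpha>) (t \<otimes> s) = t \<otimes> \<alpha> s" if "s \<in> carrier G" for s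
  proof -
    have "hol_act G (g, \<alpha>) (t \<otimes> s) = \<alpha> ((inv g \<otimes> t) \<otimes> s)"
      using assms(1) tG that by (simp add: hol_act_def m_assoc)
    also have "\<dots> = t \<otimes> \<alpha> s"
      using assms(1,2) tG that t_fixed by (simp add: hom_mult)
    finally show ?thesis .
  qed
  have fixed_iff: "t \<otimes> s \<in> hol_fix G (g, \<alpha>) \<longleftrightarrow> s \<in> aut_centralizer G \<alpha>"
    if "s \<in> carrier G" for s
    using that tG shift[OF that] hom_in_carrier[OF assms(2) that]
    by (auto simp: hol_fix_def aut_centralizer_def)
  show ?thesis
  proof (intro equalityI subsetI)
    fix u assume u: "u \<in> hol_fix G (g, \<alpha>)"
    then have uG: "u \<in> carrier G"
      by (simp add: hol_fix_def)
    then have "u = t \<otimes> (inv t \<otimes> u)"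
      using tG by (simp add: m_assoc[symmetric])
    with u uG tG fixed_iff[of "inv t \<otimes> u"] show "u \<in> (\<lambda>s. t \<otimes> s) ` aut_centralizer G \<alpha>"
      by (metis image_eqI inv_closed m_closed)
  next
    fix u assume "u \<in> (\<lambda>s. t \<otimes> s) ` aut_centralizer G \<alpha>"
    then show "u \<in> hol_fix G (g, \<alpha>)"
      using fixed_iff by (auto simp: aut_centralizer_def)
  qed
qed

lemma (in group) card_hol_fix:
  assumes "g \<in> carrier G" "\<alpha> \<in> hom G G" "hol_fix G (g, \<alpha>) \<noteq> {}"
  shows "card (hol_fix G (g, \<alpha>)) = card (aut_centralizer G \<alpha>)"
proof -
  obtain t where t: "t \<in> hol_fix G (g, \<alpha>)"
    using assms(3) by blast
  then have "inj_on (\<lambda>s. t \<otimes> s) (aut_centralizer G \<alpha>)"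
    by (auto simp: inj_on_def hol_fix_def aut_centralizer_def)
  then show ?thesis
    using hol_fix_eq_coset[OF assms(1,2) t] by (simp add: card_image)
qed

lemma (in group) centralizer_cards_subset_hol_fix_cards:
  "{card (aut_centralizer G \<alpha>) | \<alpha>. \<alpha> \<in> auto G \<and> \<alpha> \<noteq> (\<lambda>x \<in> carrier G. x)}
     \<subseteq> {card (hol_fix G p) | p. p \<in> hol_elems G \<and> p \<noteq> hol_one G}"
proof clarify
  fix \<alpha> assume "\<alpha> \<in> auto G" "\<alpha> \<noteq> (\<lambda>x \<in> carrier G. x)"
  then have "(\<one>, \<alpha>) \<in> hol_elems G \<and> (\<one>, \<alpha>) \<noteq> hol_one G"
    by (auto simp: hol_elems_def hol_one_def)
  then show "\<exists>p. card (aut_centralizer G \<alpha>) = card (hol_fix G p)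
                 \<and> p \<in> hol_elems G \<and> p \<noteq> hol_one G"
    by (metis hol_fix_one)
qed

lemma (in group) hol_fix_cards_subset_centralizer_cards:
  "{card (hol_fix G p) | p. p \<in> hol_elems G \<and> p \<noteq> hol_one G}
     \<subseteq> insert 0 {card (aut_centralizer G \<alpha>) | \<alpha>. \<alpha> \<in> auto G \<and> \<alpha> \<noteq> (\<lambda>x \<in> carrier G. x)}"
proof
  fix n assume "n \<in> {card (hol_fix G p) | p. p \<in> hol_elems G \<and> p \<noteq> hol_one G}"
  then obtain g \<alpha> where p: "(g, \<alpha>) \<in> hol_elems G" "(g, \<alpha>) \<noteq> hol_one G"
    and n: "n = card (hol_fix G (g, \<alpha>))"
    by auto
  have g: "g \<in> carrier G" and \<alpha>: "\<alpha> \<in> auto G"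
    using p(1) by (auto simp: hol_elems_def)
  show "n \<in> insert 0 {card (aut_centralizer G \<alpha>) | \<alpha>. \<alpha> \<in> auto G \<and> \<alpha> \<noteq> (\<lambda>x \<in> carrier G. x)}"
  proof (cases "hol_fix G (g, \<alpha>) = {}")
    case True
    then show ?thesis
      using n by simp
  next
    case False
    then have "\<alpha> \<noteq> (\<lambda>x \<in> carrier G. x)"
      using g p(2) hol_fix_translation by (auto simp: hol_one_def)
    moreover have "n = card (aut_centralizer G \<alpha>)"
      using n g \<alpha> False card_hol_fix by (simp add: auto_def)
    ultimately show ?thesis
      using \<alpha> by blast
  qed
qed

theorem lemma3p3:
  fixes T (structure)
  assumes "simple_group T" and "finite (carrier T)" and "\<not> comm_group T"
  shows "hol_fixity T = h_param T"
proof -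
  interpret group T
    using assms(1) by (rule simple_group.axioms)
  let ?C = "{card (aut_centralizer T \<alpha>) | \<alpha>. \<alpha> \<in> auto T \<and> \<alpha> \<noteq> (\<lambda>x \<in> carrier T. x)}"
  have "?C \<subseteq> card ` Pow (carrier T)"
    by (auto simp: aut_centralizer_def)
  then have "finite ?C"
    using assms(2) finite_subset by blast
  moreover obtain \<alpha> where "\<alpha> \<in> auto T" "\<alpha> \<noteq> (\<lambda>x \<in> carrier T. x)"
    using nontrivial_auto_if_not_comm[OF assms(3)] .
  then have "?C \<noteq> {}"
    by blast
  ultimately show ?thesis
    unfolding hol_fixity_def h_param_def
    using centralizer_cards_subset_hol_fix_cards hol_fix_cards_subset_centralizer_cards
    by (rule Max_eq_between_insert_zero)
qed

end
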